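(* Let $d\ge 2$, $n\ge 2$ and $R=\mathbb{C}[x_0,\dots,x_n]$. A tuple $(f_{ij}: 0\le i<j\le n)\in R_d^{\binom{n+1}{2}}$ is the tuple of determinantal equations of the eigenscheme of a polynomial in $R_d$, i.e. there exists $f\in R_d$ with $f_{ij}=x_i\partial_jf-x_j\partial_if$ for all $0\le i<j\le n$, if and only if $$x_if_{jk}-x_jf_{ik}+x_kf_{ij}=0\quad\text{and}\quad \partial_if_{jk}-\partial_jf_{ik}+\partial_kf_{ij}=0$$ for every $0\le i<j<k\le n$.
   Context: $\partial_i$ denotes the partial derivative $\partial/\partial x_i$. For a symmetric tensor identified with $f\in R_d$, the eigenscheme $E(f)\subseteq\mathbb{P}^n$ is defined by the $2\times 2$ minors $x_i\partial_jf-x_j\partial_if$ of $\begin{pmatrix} x_0&\dots&x_n\\ \partial_0f&\dots&\partial_nf\end{pmatrix}$, called its determinantal equations. *)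

theory Defs
  imports Complex_Main "HOL-Library.Poly_Mapping"
begin

text \<open>Polynomials in C[x_0, x_1, ...]: monomials are exponent vectors nat =>0 nat,
  a polynomial is a finitely supported map from monomials to complex coefficients.\<close>
type_synonym mpoly = "(nat \<Rightarrow>\<^sub>0 nat) \<Rightarrow>\<^sub>0 complex"

definition Var :: "nat \<Rightarrow> mpoly" where
  "Var i = Poly_Mapping.single (Poly_Mapping.single i 1) 1"

definition pdiff :: "nat \<Rightarrow> mpoly \<Rightarrow> mpoly" where
  "pdiff i p = (\<Sum>m\<in>Poly_Mapping.keys p.
     Poly_Mapping.single (m - Poly_Mapping.single i 1) (of_nat (Poly_Mapping.lookup m i) * Poly_Mapping.lookup p m))"

definition in_Rd :: "nat \<Rightarrow> nat \<Rightarrow> mpoly \<Rightarrow> bool" where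
  "in_Rd n d p \<longleftrightarrow> (\<forall>m\<in>Poly_Mapping.keys p. Poly_Mapping.keys m \<subseteq> {..n} \<and> (\<Sum>v\<in>Poly_Mapping.keys m. Poly_Mapping.lookup m v) = d)"

end

theory Submission
  imports Defs
begin

text \<open>Regard \<open>F\<close> as a polynomial 2-form and let \<open>x = (x\<^sub>0, \<dots>, x\<^sub>n)\<close>. The first condition says
  \<open>x \<and> F = 0\<close>, so \<open>F = x \<and> g\<close> for a 1-form \<open>g\<close> by exactness of the Koszul complex of
  \<open>x\<^sub>0, \<dots>, x\<^sub>n\<close> (this needs \<open>n \<ge> 2\<close>). As \<open>d(x \<and> g) = -x \<and> dg\<close>, the second condition says
  \<open>x \<and> dg = 0\<close>. Every such \<open>g\<close> is \<open>\<nabla>h + k x\<close>: write \<open>dg = x \<and> b\<close>; then \<open>x \<and> db = 0\<close> with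
  \<open>b\<close> of lower degree, so by induction \<open>b = \<nabla>h' + k' x\<close>, which makes \<open>g + h' x\<close> closed and hence a
  gradient (Poincare lemma via Euler's identity). Since \<open>x \<and> x = 0\<close>, \<open>F = x \<and> \<nabla>h\<close>, and the
  degree-\<open>d\<close> component of \<open>h\<close> is the required \<open>f\<close>.\<close>

abbreviation lookup :: "('a \<Rightarrow>\<^sub>0 'b::zero) \<Rightarrow> 'a \<Rightarrow> 'b" where
  "lookup \<equiv> Poly_Mapping.lookup"

abbreviation unit_exp :: "nat \<Rightarrow> (nat \<Rightarrow>\<^sub>0 nat)" where
  "unit_exp i \<equiv> Poly_Mapping.single i 1"

lemmas monomial_simps =
  poly_mapping_eq_iff fun_eq_iff lookup_add lookup_minus lookup_single when_def

lemma lookup_single_mult: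
  fixes p :: mpoly
  shows "lookup (Poly_Mapping.single k c * p) m =
     (if \<forall>x. lookup k x \<le> lookup m x then c * lookup p (m - k) else 0)"
proof -
  have split_iff: "m = k + q \<longleftrightarrow> (\<forall>x. lookup k x \<le> lookup m x) \<and> q = m - k"
    for q :: "nat \<Rightarrow>\<^sub>0 nat"
    by (auto simp: poly_mapping_eq_iff fun_eq_iff lookup_add lookup_minus)
  have "lookup (Poly_Mapping.single k c * p) m = c * (\<Sum>q. lookup p q when m = k + q)"
    by (simp add: lookup_mult lookup_single when_mult)
  also have "\<dots> = c * (\<Sum>q. lookup p q when (\<forall>x. lookup k x \<le> lookup m x) when q = m - k)"
    by (simp add: split_iff when_when conj_commute)
  finally show ?thesis
    by simp
qed

lemma lookup_Var_mult:
  "lookup (Var i * p) m = (if 1 \<le> lookup m i then lookup p (m - unit_exp i) else 0)"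
  unfolding Var_def lookup_single_mult
  by (auto simp: lookup_single when_def split: if_splits)

lemma lookup_pdiff:
  "lookup (pdiff i p) m = of_nat (lookup m i + 1) * lookup p (m + unit_exp i)"
proof -
  have "(of_nat (lookup mu i) * lookup p mu when mu - unit_exp i = m) =
        (if mu = m + unit_exp i then of_nat (lookup mu i) * lookup p mu else 0)" for mu
  proof (cases "lookup mu i = 0")
    case True
    then have "mu \<noteq> m + unit_exp i"
      by (auto simp: poly_mapping_eq_iff fun_eq_iff lookup_add intro!: exI[of _ i])
    with True show ?thesis
      by (simp add: when_def)
  next
    case False
    then have "mu - unit_exp i = m \<longleftrightarrow> mu = m + unit_exp i"
      by (auto simp: monomial_simps)
    then show ?thesis
      by (simp add: when_def)
  qed
  then have "lookup (pdiff i p) m = (\<Sum>mu\<in>Poly_Mapping.keys p.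
      if mu = m + unit_exp i then of_nat (lookup mu i) * lookup p mu else 0)"
    by (simp add: pdiff_def lookup_sum lookup_single)
  then show ?thesis
    by (simp add: sum.delta lookup_add in_keys_iff)
qed

lemma pdiff_zero [simp]: "pdiff i 0 = 0"
  by (rule poly_mapping_eqI) (simp add: lookup_pdiff)

lemma pdiff_add: "pdiff i (p + q) = pdiff i p + pdiff i q"
  by (rule poly_mapping_eqI) (simp add: lookup_pdiff lookup_add distrib_left)

lemma pdiff_diff: "pdiff i (p - q) = pdiff i p - pdiff i q"
  by (rule poly_mapping_eqI) (simp add: lookup_pdiff lookup_minus right_diff_distrib)

lemma pdiff_sum: "pdiff i (\<Sum>x\<in>A. f x) = (\<Sum>x\<in>A. pdiff i (f x))"
  by (induction A rule: infinite_finite_induct) (simp_all add: pdiff_add)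

lemma pdiff_Var_mult:
  "pdiff i (Var j * p) = Var j * pdiff i p + (if i = j then p else 0)"
proof (rule poly_mapping_eqI)
  fix m
  show "lookup (pdiff i (Var j * p)) m = lookup (Var j * pdiff i p + (if i = j then p else 0)) m"
  proof (cases "i = j")
    case True
    have "m + unit_exp i - unit_exp i = m"
      by (simp add: monomial_simps)
    moreover have "1 \<le> lookup m i \<Longrightarrow>
        m - unit_exp i + unit_exp i = m \<and> lookup (m - unit_exp i) i + 1 = lookup m i"
      by (auto simp: monomial_simps)
    ultimately show ?thesis
      using True by (auto simp: lookup_pdiff lookup_Var_mult lookup_add distrib_right)
  next
    case False
    then have "1 \<le> lookup m j \<Longrightarrow> m + unit_exp i - unit_exp j = m - unit_exp j + unit_exp i"
      and "lookup (m - unit_exp j) i = lookup m i" "lookup (m + unit_exp i) j = lookup m j"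
      by (auto simp: monomial_simps)
    with False show ?thesis
      by (simp add: lookup_pdiff lookup_Var_mult lookup_add)
  qed
qed

lemma pdiff_Var_mult_other: "i \<noteq> j \<Longrightarrow> pdiff i (Var j * p) = Var j * pdiff i p"
  by (simp add: pdiff_Var_mult)

lemma pdiff_commute: "pdiff i (pdiff j p) = pdiff j (pdiff i p)"
proof (rule poly_mapping_eqI)
  fix m
  have "m + unit_exp i + unit_exp j = m + unit_exp j + unit_exp i"
    by (simp add: add_ac)
  moreover have "lookup (m + unit_exp i) j = lookup m j + (if i = j then 1 else 0)"
    "lookup (m + unit_exp j) i = lookup m i + (if i = j then 1 else 0)"
    by (auto simp: monomial_simps)
  ultimately show "lookup (pdiff i (pdiff j p)) m = lookup (pdiff j (pdiff i p)) m"
    by (cases "i = j") (simp_all add: lookup_pdiff mult.commute)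
qed

definition subst_zero :: "nat \<Rightarrow> mpoly \<Rightarrow> mpoly" where
  "subst_zero i p = Poly_Mapping.mapp (\<lambda>m c. if lookup m i = 0 then c else 0) p"

definition quot_Var :: "nat \<Rightarrow> mpoly \<Rightarrow> mpoly" where
  "quot_Var i p = Abs_poly_mapping (\<lambda>m. lookup p (m + unit_exp i))"

lemma lookup_subst_zero: "lookup (subst_zero i p) m = (if lookup m i = 0 then lookup p m else 0)"
  by (simp add: subst_zero_def lookup_mapp when_def in_keys_iff)

lemma lookup_quot_Var: "lookup (quot_Var i p) m = lookup p (m + unit_exp i)"
proof -
  have "{m. lookup p (m + unit_exp i) \<noteq> 0} = (\<lambda>m. m + unit_exp i) -` Poly_Mapping.keys p"
    by (auto simp: in_keys_iff)
  moreover have "inj (\<lambda>m::nat \<Rightarrow>\<^sub>0 nat. m + unit_exp i)"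
    by (rule injI) simp
  ultimately have "finite {m. lookup p (m + unit_exp i) \<noteq> 0}"
    by (simp add: finite_vimageI)
  then show ?thesis
    by (simp add: quot_Var_def)
qed

lemma quot_Var_Var_mult [simp]: "quot_Var i (Var i * p) = p"
proof (rule poly_mapping_eqI)
  fix m
  have "m + unit_exp i - unit_exp i = m"
    by (simp add: monomial_simps)
  then show "lookup (quot_Var i (Var i * p)) m = lookup p m"
    by (simp add: lookup_quot_Var lookup_Var_mult lookup_add)
qed

lemma Var_mult_cancel: "Var i * p = Var i * q \<Longrightarrow> p = q"
  by (metis quot_Var_Var_mult)

lemma subst_zero_plus_Var_mult_quot: "subst_zero i p + Var i * quot_Var i p = p"
proof (rule poly_mapping_eqI)
  fix m
  have "1 \<le> lookup m i \<Longrightarrow> m - unit_exp i + unit_exp i = m"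
    by (auto simp: monomial_simps)
  then show "lookup (subst_zero i p + Var i * quot_Var i p) m = lookup p m"
    by (auto simp: lookup_add lookup_subst_zero lookup_Var_mult lookup_quot_Var)
qed

lemma subst_zero_Var_mult [simp]: "subst_zero i (Var i * p) = 0"
  by (rule poly_mapping_eqI) (simp add: lookup_subst_zero lookup_Var_mult)

lemma subst_zero_Var_mult_other: "j \<noteq> i \<Longrightarrow> subst_zero i (Var j * p) = Var j * subst_zero i p"
proof (rule poly_mapping_eqI)
  fix m
  assume "j \<noteq> i"
  then have "lookup (m - unit_exp j) i = lookup m i"
    by (auto simp: monomial_simps)
  then show "lookup (subst_zero i (Var j * p)) m = lookup (Var j * subst_zero i p) m"
    by (simp add: lookup_subst_zero lookup_Var_mult)
qed

lemma subst_zero_diff: "subst_zero i (p - q) = subst_zero i p - subst_zero i q"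
  by (rule poly_mapping_eqI) (simp add: lookup_subst_zero lookup_minus)

lemma subst_zero_eq_0_if_Var_mult_eq:
  assumes "i \<noteq> j" and "Var i * p = Var j * q"
  shows "subst_zero i q = 0"
proof (rule poly_mapping_eqI)
  fix m
  have "lookup q m = 0" if "lookup m i = 0"
  proof -
    have "lookup (m + unit_exp j) i = 0" "lookup (m + unit_exp j) j = lookup m j + 1"
      "m + unit_exp j - unit_exp j = m"
      using that assms(1) by (auto simp: monomial_simps)
    then show ?thesis
      using arg_cong[OF assms(2), of "\<lambda>p. lookup p (m + unit_exp j)"]
      by (simp add: lookup_Var_mult)
  qed
  then show "lookup (subst_zero i q) m = lookup 0 m"
    by (simp add: lookup_subst_zero)
qed

lemma Var_mult_eq_imp_common_factor:
  assumes "i \<in> I" "j \<in> I" "i \<noteq> j"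
    and sym: "\<And>k l. k \<in> I \<Longrightarrow> l \<in> I \<Longrightarrow> Var k * u l = Var l * u k"
  shows "k \<in> I \<Longrightarrow> u k = Var k * quot_Var i (u i)"
proof -
  have "subst_zero i (u i) = 0"
    by (rule subst_zero_eq_0_if_Var_mult_eq[OF \<open>i \<noteq> j\<close> sym[OF \<open>i \<in> I\<close> \<open>j \<in> I\<close>]])
  then have ui: "u i = Var i * quot_Var i (u i)"
    by (metis add_0 subst_zero_plus_Var_mult_quot)
  assume "k \<in> I"
  have "Var i * u k = Var k * u i"
    using sym[OF \<open>i \<in> I\<close> \<open>k \<in> I\<close>] .
  also have "\<dots> = Var i * (Var k * quot_Var i (u i))"
    by (subst ui) (simp add: mult.left_commute)
  finally show ?thesis
    by (rule Var_mult_cancel)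
qed

definition tdeg :: "nat \<Rightarrow> (nat \<Rightarrow>\<^sub>0 nat) \<Rightarrow> nat" where
  "tdeg n m = (\<Sum>v\<le>n. lookup m v)"

definition deg_le :: "nat \<Rightarrow> nat \<Rightarrow> mpoly \<Rightarrow> bool" where
  "deg_le n d p \<longleftrightarrow> (\<forall>m. lookup p m \<noteq> 0 \<longrightarrow> tdeg n m \<le> d)"

lemma tdeg_add_unit_exp: "j \<le> n \<Longrightarrow> tdeg n (m + unit_exp j) = tdeg n m + 1"
  by (simp add: tdeg_def lookup_add sum.distrib lookup_single when_def)

lemma deg_le_uminus: "deg_le n d p \<Longrightarrow> deg_le n d (- p)"
  by (simp add: deg_le_def)

lemma deg_le_diff: "deg_le n d p \<Longrightarrow> deg_le n d q \<Longrightarrow> deg_le n d (p - q)"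
  unfolding deg_le_def lookup_minus by (metis diff_zero diff_self)

lemma deg_le_subst_zero: "deg_le n d p \<Longrightarrow> deg_le n d (subst_zero i p)"
  by (auto simp: deg_le_def lookup_subst_zero)

lemma deg_le_quot_Var: "i \<le> n \<Longrightarrow> deg_le n d p \<Longrightarrow> deg_le n (d - 1) (quot_Var i p)"
  unfolding deg_le_def lookup_quot_Var
  by (metis add_diff_cancel_right' diff_le_mono tdeg_add_unit_exp)

lemma deg_le_pdiff: "i \<le> n \<Longrightarrow> deg_le n d p \<Longrightarrow> deg_le n (d - 1) (pdiff i p)"
  unfolding deg_le_def lookup_pdiff
  by (metis add_diff_cancel_right' diff_le_mono tdeg_add_unit_exp mult_zero_right)

lemma pdiff_eq_0_if_deg_le_0: "i \<le> n \<Longrightarrow> deg_le n 0 p \<Longrightarrow> pdiff i p = 0"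
  by (rule poly_mapping_eqI)
    (metis deg_le_def lookup_pdiff tdeg_add_unit_exp add_is_0 lookup_zero mult_zero_right
      one_neq_zero le_0_eq)

lemma tdeg_eq_sum_keys:
  "Poly_Mapping.keys m \<subseteq> {..n} \<Longrightarrow> tdeg n m = (\<Sum>v\<in>Poly_Mapping.keys m. lookup m v)"
  unfolding tdeg_def by (intro sum.mono_neutral_right) (auto simp: in_keys_iff)

lemma deg_le_if_in_Rd: "in_Rd n d p \<Longrightarrow> deg_le n d p"
  by (auto simp: in_Rd_def deg_le_def tdeg_eq_sum_keys in_keys_iff)

subsection \<open>Exactness of the Koszul complex in degree two\<close>

text \<open>A 2-form is given by its coefficients \<open>F i j\<close> for \<open>i < j\<close>; other values are ignored.
  \<open>is_cycle D\<close> is the cycle condition in the complex \<open>\<Lambda>\<^sup>2 \<rightarrow> \<Lambda>\<^sup>3\<close> built from commuting operators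
  \<open>D\<^sub>0, \<dots>, D\<^sub>n\<close>: multiplication by the variables (Koszul) or partial derivatives (de Rham).\<close>

definition is_cycle :: "(nat \<Rightarrow> mpoly \<Rightarrow> mpoly) \<Rightarrow> nat \<Rightarrow> (nat \<Rightarrow> nat \<Rightarrow> mpoly) \<Rightarrow> bool" where
  "is_cycle D n F \<longleftrightarrow> (\<forall>i j k. i < j \<and> j < k \<and> k \<le> n \<longrightarrow> D i (F j k) - D j (F i k) + D k (F i j) = 0)"

abbreviation koszul_cycle :: "nat \<Rightarrow> (nat \<Rightarrow> nat \<Rightarrow> mpoly) \<Rightarrow> bool" where
  "koszul_cycle \<equiv> is_cycle (\<lambda>i p. Var i * p)"

abbreviation d_closed :: "nat \<Rightarrow> (nat \<Rightarrow> nat \<Rightarrow> mpoly) \<Rightarrow> bool" where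
  "d_closed \<equiv> is_cycle pdiff"

definition x_wedge :: "(nat \<Rightarrow> mpoly) \<Rightarrow> nat \<Rightarrow> nat \<Rightarrow> mpoly" where
  "x_wedge g i j = Var i * g j - Var j * g i"

definition ext_d :: "(nat \<Rightarrow> mpoly) \<Rightarrow> nat \<Rightarrow> nat \<Rightarrow> mpoly" where
  "ext_d g i j = pdiff i (g j) - pdiff j (g i)"

lemma is_cycle_cong:
  assumes "\<And>i j. i < j \<Longrightarrow> j \<le> n \<Longrightarrow> F i j = G i j"
  shows "is_cycle D n F \<longleftrightarrow> is_cycle D n G"
proof -
  have "F j k = G j k \<and> F i k = G i k \<and> F i j = G i j" if "i < j" "j < k" "k \<le> n" for i j k
    using assms that by simp
  then show ?thesis
    unfolding is_cycle_def by (metis (no_types, lifting))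
qed

text \<open>Modulo \<open>x\<^sub>0\<close> the cycle condition gives \<open>x\<^sub>j u\<^sub>k = x\<^sub>k u\<^sub>j\<close> for the \<open>x\<^sub>0\<close>-free parts \<open>u\<^sub>j\<close>
  of \<open>F\<^sub>0\<^sub>j\<close>, so \<open>u\<^sub>j = x\<^sub>j h\<close>; then \<open>g\<^sub>0 = -h\<close> and \<open>g\<^sub>j = F\<^sub>0\<^sub>j div x\<^sub>0\<close> work.\<close>

lemma koszul_exact:
  assumes "2 \<le> n" and cycle: "koszul_cycle n F"
    and deg: "\<And>i j. i < j \<Longrightarrow> j \<le> n \<Longrightarrow> deg_le n d (F i j)"
  obtains g where "\<And>i j. i < j \<Longrightarrow> j \<le> n \<Longrightarrow> F i j = x_wedge g i j"
    and "\<And>i. i \<le> n \<Longrightarrow> deg_le n (d - 1) (g i)"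
proof -
  define u where "u j = subst_zero 0 (F 0 j)" for j
  have cycle0: "Var 0 * F j k = Var j * F 0 k - Var k * F 0 j" if "0 < j" "j < k" "k \<le> n" for j k
    using cycle that unfolding is_cycle_def by (simp add: algebra_simps eq_neg_iff_add_eq_0)
  have u_less: "Var j * u k = Var k * u j" if "0 < j" "j < k" "k \<le> n" for j k
    using arg_cong[OF cycle0[OF that], of "subst_zero 0"] that
    by (simp add: u_def subst_zero_diff subst_zero_Var_mult_other)
  have u_sym: "Var j * u k = Var k * u j" if "j \<in> {1..n}" "k \<in> {1..n}" for j k
    using that u_less[of j k] u_less[of k j] by (cases j k rule: linorder_cases) auto
  define h where "h = quot_Var 1 (u 1)"
  have u_eq: "u j = Var j * h" if "j \<in> {1..n}" for j
    using Var_mult_eq_imp_common_factor[of 1 "{1..n}" 2 u, OF _ _ _ u_sym that] \<open>2 \<le> n\<close>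
    by (simp add: h_def)
  define g where "g j = (if j = 0 then - h else quot_Var 0 (F 0 j))" for j
  have F0: "F 0 j = x_wedge g 0 j" if "0 < j" "j \<le> n" for j
    using subst_zero_plus_Var_mult_quot[of 0 "F 0 j"] u_eq[of j] that
    by (simp add: x_wedge_def g_def u_def add.commute)
  have "F j k = x_wedge g j k" if "0 < j" "j < k" "k \<le> n" for j k
  proof (rule Var_mult_cancel)
    show "Var 0 * F j k = Var 0 * x_wedge g j k"
      using cycle0[OF that] F0[of j] F0[of k] that
      by (simp add: x_wedge_def algebra_simps)
  qed
  with F0 have "F i j = x_wedge g i j" if "i < j" "j \<le> n" for i j
    using that by (cases "i = 0") auto
  moreover have "deg_le n (d - 1) (g i)" if "i \<le> n" for i
  proof (cases "i = 0")
    case True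
    have "deg_le n d (subst_zero 0 (F 0 1))"
      using deg[of 0 1] \<open>2 \<le> n\<close> by (simp add: deg_le_subst_zero)
    then have "deg_le n (d - 1) (quot_Var 1 (subst_zero 0 (F 0 1)))"
      using \<open>2 \<le> n\<close> by (intro deg_le_quot_Var) auto
    with True show ?thesis
      unfolding g_def h_def u_def by (simp add: deg_le_uminus)
  next
    case False
    with deg[of 0 i] deg_le_quot_Var[of 0 n d "F 0 i"] that show ?thesis
      unfolding g_def by simp
  qed
  ultimately show ?thesis
    using that by blast
qed

lemma koszul_cycle_x_wedge: "koszul_cycle n (x_wedge g)"
  unfolding is_cycle_def x_wedge_def by (simp add: algebra_simps)

lemma ext_d_grad [simp]: "ext_d (\<lambda>i. pdiff i f) i j = 0"
  by (simp add: ext_d_def pdiff_commute)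

lemma d_closed_ext_d: "d_closed n (ext_d a)"
  unfolding is_cycle_def ext_d_def by (simp add: pdiff_diff pdiff_commute)

lemma d_closed_x_wedge_iff: "d_closed n (x_wedge g) \<longleftrightarrow> koszul_cycle n (ext_d g)"
proof -
  have "pdiff i (x_wedge g j k) - pdiff j (x_wedge g i k) + pdiff k (x_wedge g i j)
      = - (Var i * ext_d g j k - Var j * ext_d g i k + Var k * ext_d g i j)"
    if "i < j" "j < k" for i j k
    using that by (simp add: x_wedge_def ext_d_def pdiff_diff pdiff_Var_mult_other algebra_simps)
  then show ?thesis
    unfolding is_cycle_def by (metis neg_equal_0_iff_equal)
qed

lemma antisymmetric_eq_if_eq_on_less:
  fixes A B :: "nat \<Rightarrow> nat \<Rightarrow> 'a::group_add"
  assumes "\<And>i j. A j i = - A i j" "\<And>i j. B j i = - B i j" "\<And>i. A i i = B i i"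
    and "\<And>i j. i < j \<Longrightarrow> j \<le> n \<Longrightarrow> A i j = B i j"
    and "i \<le> n" "j \<le> n"
  shows "A i j = B i j"
proof (cases i j rule: linorder_cases)
  case less
  then show ?thesis
    using assms(4,6) by blast
next
  case equal
  then show ?thesis
    using assms(3) by blast
next
  case greater
  then have "A j i = B j i"
    using assms(4,5) by blast
  then show ?thesis
    by (metis assms(1,2))
qed

lemma ext_d_add_radial_eq_0:
  assumes ext_d_eq: "\<And>i j. i < j \<Longrightarrow> j \<le> n \<Longrightarrow> ext_d a i j = x_wedge b i j"
    and b_eq: "\<And>i. i \<le> n \<Longrightarrow> b i = pdiff i h + k * Var i"
    and "i \<le> n" "j \<le> n"
  shows "ext_d (\<lambda>i. a i + h * Var i) i j = 0"
proof -
  have "ext_d a i j = x_wedge b i j"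
    by (rule antisymmetric_eq_if_eq_on_less[OF _ _ _ ext_d_eq \<open>i \<le> n\<close> \<open>j \<le> n\<close>])
      (simp_all add: ext_d_def x_wedge_def)
  moreover have "ext_d (\<lambda>i. a i + h * Var i) i j
      = ext_d a i j + (Var j * pdiff i h - Var i * pdiff j h)"
    by (simp add: ext_d_def pdiff_add mult.commute[of h] pdiff_Var_mult)
  ultimately have "ext_d (\<lambda>i. a i + h * Var i) i j
      = Var i * (b j - pdiff j h) - Var j * (b i - pdiff i h)"
    by (simp add: x_wedge_def right_diff_distrib)
  also have "\<dots> = 0"
    using b_eq \<open>i \<le> n\<close> \<open>j \<le> n\<close> by (simp add: mult.left_commute)
  finally show ?thesis .
qed

subsection \<open>Closed 1-forms are gradients\<close>

definition div_tdeg :: "nat \<Rightarrow> mpoly \<Rightarrow> mpoly" where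
  "div_tdeg n p = Poly_Mapping.mapp (\<lambda>m c. c / of_nat (tdeg n m)) p"

lemma lookup_div_tdeg: "lookup (div_tdeg n p) m = lookup p m / of_nat (tdeg n m)"
  by (simp add: div_tdeg_def lookup_mapp when_def in_keys_iff)

lemma lookup_euler_sum: "lookup (\<Sum>i\<le>n. Var i * pdiff i p) m = of_nat (tdeg n m) * lookup p m"
proof -
  have "lookup (Var i * pdiff i p) m = of_nat (lookup m i) * lookup p m" for i
  proof (cases "1 \<le> lookup m i")
    case True
    then have "m - unit_exp i + unit_exp i = m" "lookup (m - unit_exp i) i + 1 = lookup m i"
      by (auto simp: monomial_simps)
    with True show ?thesis
      by (simp add: lookup_Var_mult lookup_pdiff)
  qed (simp add: lookup_Var_mult)
  then show ?thesis
    by (simp add: lookup_sum tdeg_def sum_distrib_right)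
qed

text \<open>By closedness and Euler's identity, \<open>\<partial>\<^sub>j (\<Sum> x\<^sub>i a\<^sub>i)\<close> is \<open>a\<^sub>j\<close> with each monomial scaled by
  its degree plus one; dividing \<open>\<Sum> x\<^sub>i a\<^sub>i\<close> monomialwise by its degree undoes this.\<close>

lemma pdiff_div_tdeg_eq_if_closed:
  assumes closed: "\<And>i j. i \<le> n \<Longrightarrow> j \<le> n \<Longrightarrow> pdiff i (a j) = pdiff j (a i)" and "j \<le> n"
  shows "pdiff j (div_tdeg n (\<Sum>i\<le>n. Var i * a i)) = a j"
proof (rule poly_mapping_eqI)
  fix m
  have "pdiff j (\<Sum>i\<le>n. Var i * a i) = (\<Sum>i\<le>n. Var i * pdiff j (a i) + (if j = i then a i else 0))"
    by (simp add: pdiff_sum pdiff_Var_mult)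
  also have "\<dots> = (\<Sum>i\<le>n. Var i * pdiff i (a j)) + a j"
    using closed \<open>j \<le> n\<close> by (simp add: sum.distrib)
  finally have "lookup (pdiff j (\<Sum>i\<le>n. Var i * a i)) m = of_nat (tdeg n m + 1) * lookup (a j) m"
    by (simp add: lookup_add lookup_euler_sum distrib_right)
  moreover have "(of_nat (tdeg n m + 1) :: complex) \<noteq> 0"
    by (simp only: of_nat_eq_0_iff)
  ultimately show "lookup (pdiff j (div_tdeg n (\<Sum>i\<le>n. Var i * a i))) m = lookup (a j) m"
    unfolding lookup_pdiff lookup_div_tdeg tdeg_add_unit_exp[OF \<open>j \<le> n\<close>]
    by (simp add: lookup_pdiff)
qed

subsection \<open>Solutions of \<open>x \<and> dg = 0\<close>\<close>

lemma deg_le_ext_d: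
  "i \<le> n \<Longrightarrow> j \<le> n \<Longrightarrow> deg_le n d (a i) \<Longrightarrow> deg_le n d (a j) \<Longrightarrow> deg_le n (d - 1) (ext_d a i j)"
  unfolding ext_d_def by (intro deg_le_diff deg_le_pdiff)

text \<open>Induction on a degree bound: \<open>da = x \<and> b\<close> by Koszul exactness, and \<open>b\<close> again satisfies
  \<open>x \<and> db = 0\<close> because \<open>-x \<and> db = d(x \<and> b) = dda = 0\<close>.\<close>

lemma grad_plus_radial_if_koszul_cycle_ext_d:
  assumes "2 \<le> n"
  shows "(\<And>i. i \<le> n \<Longrightarrow> deg_le n d (a i)) \<Longrightarrow> koszul_cycle n (ext_d a) \<Longrightarrow>
    \<exists>h k. \<forall>i\<le>n. a i = pdiff i h + k * Var i"
proof (induction d arbitrary: a rule: less_induct)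
  case (less d a)
  show ?case
  proof (cases "d = 0")
    case True
    have "pdiff i (a j) = pdiff j (a i)" if "i \<le> n" "j \<le> n" for i j
      using pdiff_eq_0_if_deg_le_0[OF that(1) less.prems(1)[OF that(2), unfolded True]]
        pdiff_eq_0_if_deg_le_0[OF that(2) less.prems(1)[OF that(1), unfolded True]]
      by simp
    then have "\<forall>i\<le>n. a i = pdiff i (div_tdeg n (\<Sum>i\<le>n. Var i * a i)) + 0 * Var i"
      using pdiff_div_tdeg_eq_if_closed by simp
    then show ?thesis
      by blast
  next
    case False
    have "deg_le n (d - 1) (ext_d a i j)" if "i < j" "j \<le> n" for i j
      using deg_le_ext_d less.prems(1) that by simp
    then obtain b where b: "\<And>i j. i < j \<Longrightarrow> j \<le> n \<Longrightarrow> ext_d a i j = x_wedge b i j"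
      and deg_b: "\<And>i. i \<le> n \<Longrightarrow> deg_le n (d - 1 - 1) (b i)"
      using koszul_exact[OF \<open>2 \<le> n\<close> less.prems(2)] by blast
    have "koszul_cycle n (ext_d b)"
      using d_closed_ext_d[of n a] is_cycle_cong[of n "ext_d a" "x_wedge b"] b d_closed_x_wedge_iff
      by simp
    moreover have "d - 1 - 1 < d"
      using False by simp
    ultimately obtain h k where hk: "\<forall>i\<le>n. b i = pdiff i h + k * Var i"
      using less.IH[of "d - 1 - 1" b] deg_b by blast
    define a' where "a' i = a i + h * Var i" for i
    have "pdiff i (a' j) = pdiff j (a' i)" if "i \<le> n" "j \<le> n" for i j
      using ext_d_add_radial_eq_0[OF b _ that, of h k] hk unfolding a'_def ext_d_def by simp
    then have "\<forall>i\<le>n. a i = pdiff i (div_tdeg n (\<Sum>i\<le>n. Var i * a' i)) + (- h) * Var i"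
      using pdiff_div_tdeg_eq_if_closed by (simp add: a'_def)
    then show ?thesis
      by blast
  qed
qed

lemma x_wedge_grad_plus_radial:
  "x_wedge (\<lambda>i. pdiff i h + k * Var i) i j = x_wedge (\<lambda>i. pdiff i h) i j"
  by (simp add: x_wedge_def algebra_simps)

lemma exists_grad_potential:
  assumes "2 \<le> n" and "koszul_cycle n F" and "d_closed n F"
    and "\<And>i j. i < j \<Longrightarrow> j \<le> n \<Longrightarrow> deg_le n d (F i j)"
  obtains h where "\<And>i j. i < j \<Longrightarrow> j \<le> n \<Longrightarrow> F i j = x_wedge (\<lambda>i. pdiff i h) i j"
proof -
  obtain g where F: "\<And>i j. i < j \<Longrightarrow> j \<le> n \<Longrightarrow> F i j = x_wedge g i j"
    and deg_g: "\<And>i. i \<le> n \<Longrightarrow> deg_le n (d - 1) (g i)"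
    using koszul_exact assms by metis
  have "koszul_cycle n (ext_d g)"
    using assms(3) is_cycle_cong[of n F "x_wedge g"] F d_closed_x_wedge_iff by simp
  then obtain h k where "\<forall>i\<le>n. g i = pdiff i h + k * Var i"
    using grad_plus_radial_if_koszul_cycle_ext_d[of n "d - 1" g] assms(1) deg_g by blast
  then have "F i j = x_wedge (\<lambda>i. pdiff i h) i j" if "i < j" "j \<le> n" for i j
    using F[OF that] that x_wedge_grad_plus_radial[of h k i j] by (simp add: x_wedge_def)
  with that show ?thesis
    by blast
qed

subsection \<open>Projection onto \<open>R\<^sub>d\<close>\<close>

definition homog_mon :: "nat \<Rightarrow> nat \<Rightarrow> (nat \<Rightarrow>\<^sub>0 nat) \<Rightarrow> bool" where
  "homog_mon n d m \<longleftrightarrow> (\<forall>v>n. lookup m v = 0) \<and> tdeg n m = d"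

definition homog_part :: "nat \<Rightarrow> nat \<Rightarrow> mpoly \<Rightarrow> mpoly" where
  "homog_part n d p = Poly_Mapping.mapp (\<lambda>m c. if homog_mon n d m then c else 0) p"

lemma lookup_homog_part: "lookup (homog_part n d p) m = (if homog_mon n d m then lookup p m else 0)"
  by (simp add: homog_part_def lookup_mapp when_def in_keys_iff)

lemma homog_mon_iff:
  "homog_mon n d m \<longleftrightarrow>
    Poly_Mapping.keys m \<subseteq> {..n} \<and> (\<Sum>v\<in>Poly_Mapping.keys m. lookup m v) = d"
proof -
  have "Poly_Mapping.keys m \<subseteq> {..n} \<longleftrightarrow> (\<forall>v>n. lookup m v = 0)"
    unfolding subset_iff atMost_iff in_keys_iff by (meson not_le)
  then show ?thesis
    unfolding homog_mon_def by (metis tdeg_eq_sum_keys)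
qed

lemma in_Rd_iff: "in_Rd n d p \<longleftrightarrow> (\<forall>m. lookup p m \<noteq> 0 \<longrightarrow> homog_mon n d m)"
  unfolding in_Rd_def homog_mon_iff Ball_def in_keys_iff ..

lemma in_Rd_homog_part: "in_Rd n d (homog_part n d p)"
  by (simp add: in_Rd_iff lookup_homog_part)

lemma homog_part_eq_self: "in_Rd n d p \<Longrightarrow> homog_part n d p = p"
  by (rule poly_mapping_eqI) (auto simp: lookup_homog_part in_Rd_iff)

lemma homog_part_diff: "homog_part n d (p - q) = homog_part n d p - homog_part n d q"
  by (rule poly_mapping_eqI) (simp add: lookup_homog_part lookup_minus)

lemma homog_part_Var_mult_pdiff:
  assumes "i \<le> n" "j \<le> n"
  shows "homog_part n d (Var i * pdiff j h) = Var i * pdiff j (homog_part n d h)"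
proof (rule poly_mapping_eqI)
  fix m
  have "homog_mon n d m \<longleftrightarrow> homog_mon n d (m - unit_exp i + unit_exp j)" if "1 \<le> lookup m i"
  proof -
    have "m = m - unit_exp i + unit_exp i"
      using that by (auto simp: monomial_simps)
    then have "tdeg n (m - unit_exp i + unit_exp j) = tdeg n m"
      using tdeg_add_unit_exp[OF assms(1)] tdeg_add_unit_exp[OF assms(2)] by metis
    moreover have "\<forall>v>n. lookup (m - unit_exp i + unit_exp j) v = lookup m v"
      using assms by (auto simp: monomial_simps)
    ultimately show ?thesis
      unfolding homog_mon_def by auto
  qed
  then show "lookup (homog_part n d (Var i * pdiff j h)) m = lookup (Var i * pdiff j (homog_part n d h)) m"
    by (simp add: lookup_homog_part lookup_Var_mult lookup_pdiff)
qed

lemma homog_part_x_wedge_grad: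
  "i \<le> n \<Longrightarrow> j \<le> n \<Longrightarrow>
    homog_part n d (x_wedge (\<lambda>i. pdiff i h) i j) = x_wedge (\<lambda>i. pdiff i (homog_part n d h)) i j"
  by (simp add: x_wedge_def homog_part_diff homog_part_Var_mult_pdiff)

theorem theorem3p3:
  fixes d n :: nat and F :: "nat \<Rightarrow> nat \<Rightarrow> mpoly"
  assumes "d \<ge> 2" and "n \<ge> 2"
    and "\<And>i j. i < j \<Longrightarrow> j \<le> n \<Longrightarrow> in_Rd n d (F i j)"
  shows "(\<exists>f. in_Rd n d f \<and>
            (\<forall>i j. i < j \<and> j \<le> n \<longrightarrow> F i j = Var i * pdiff j f - Var j * pdiff i f))
     \<longleftrightarrow> (\<forall>i j k. i < j \<and> j < k \<and> k \<le> n \<longrightarrow>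
            Var i * F j k - Var j * F i k + Var k * F i j = 0 \<and>
            pdiff i (F j k) - pdiff j (F i k) + pdiff k (F i j) = 0)"
    (is "?L \<longleftrightarrow> ?R")
proof
  assume ?L
  then obtain f where "\<forall>i j. i < j \<and> j \<le> n \<longrightarrow> F i j = Var i * pdiff j f - Var j * pdiff i f"
    by blast
  then have F: "\<And>i j. i < j \<Longrightarrow> j \<le> n \<Longrightarrow> F i j = x_wedge (\<lambda>i. pdiff i f) i j"
    by (simp add: x_wedge_def)
  have "koszul_cycle n F"
    using is_cycle_cong[of n F "x_wedge (\<lambda>i. pdiff i f)"] F koszul_cycle_x_wedge by blast
  moreover have "d_closed n F"
    using is_cycle_cong[of n F "x_wedge (\<lambda>i. pdiff i f)"] F d_closed_x_wedge_iff
    by (simp add: is_cycle_def)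
  ultimately show ?R
    unfolding is_cycle_def by blast
next
  assume ?R
  then have "koszul_cycle n F" "d_closed n F"
    unfolding is_cycle_def by blast+
  then obtain h where F: "\<And>i j. i < j \<Longrightarrow> j \<le> n \<Longrightarrow> F i j = x_wedge (\<lambda>i. pdiff i h) i j"
    using exists_grad_potential[OF \<open>n \<ge> 2\<close>, of F d] deg_le_if_in_Rd assms(3) by blast
  have F_eq: "F i j = x_wedge (\<lambda>i. pdiff i (homog_part n d h)) i j" if "i < j" "j \<le> n" for i j
  proof -
    have "F i j = homog_part n d (F i j)"
      using homog_part_eq_self[OF assms(3)[OF that]] by simp
    also have "\<dots> = x_wedge (\<lambda>i. pdiff i (homog_part n d h)) i j"
      using F[OF that] homog_part_x_wedge_grad[of i n j d h] that by simp
    finally show ?thesis .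
  qed
  show ?L
    using in_Rd_homog_part[of n d h] F_eq by (auto simp: x_wedge_def)
qed

end
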